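(* Let $i,k\ge 3$ be integers and put $r=\lfloor (L_i-1)/F_k\rfloor$. Then $$g_0(L_i,L_{i+2},L_{i+k})=\begin{cases}(L_i-1)L_{i+2}-L_i(rF_{k-2}+1) & \text{if } r=0, \text{ or } r\ge 1 \text{ and } (L_i-rF_k)L_{i+2}>F_{k-2}L_i,\\ (rF_k-1)L_{i+2}-L_i\bigl((r-1)F_{k-2}+1\bigr) & \text{otherwise.}\end{cases}$$
   Context: Fibonacci numbers: $F_0=0$, $F_1=1$, $F_n=F_{n-1}+F_{n-2}$. Lucas numbers: $L_0=2$, $L_1=1$, $L_n=L_{n-1}+L_{n-2}$. For positive integers $a_1,\dots,a_l$ with $\gcd(a_1,\dots,a_l)=1$ and an integer $n$, let $d(n;a_1,\dots,a_l)$ be the number of tuples $(x_1,\dots,x_l)$ of nonnegative integers with $a_1x_1+\dots+a_lx_l=n$. For a nonnegative integer $p$, the $p$-Frobenius number $g_p(a_1,\dots,a_l)$ is the largest integer $n$ with $d(n;a_1,\dots,a_l)\le p$ (so $g_0$ is the classical Frobenius number). *)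

theory Defs
  imports Main "HOL-Number_Theory.Fib"
begin

fun lucas :: "nat \<Rightarrow> nat" where
  "lucas 0 = 2"
| "lucas (Suc 0) = 1"
| "lucas (Suc (Suc n)) = lucas (Suc n) + lucas n"

definition num_reps :: "int \<Rightarrow> nat list \<Rightarrow> nat" where
  "num_reps n as = card {xs :: nat list. length xs = length as \<and>
      int (\<Sum>j<length as. as ! j * xs ! j) = n}"

definition p_frobenius :: "nat \<Rightarrow> nat list \<Rightarrow> int" where
  "p_frobenius p as = (GREATEST n :: int. num_reps n as \<le> p)"

end

theory Submission
  imports Defs "HOL-Number_Theory.Cong"
begin

text \<open>Write \<open>a = L\<^sub>i\<close>, \<open>b = L\<^sub>i\<^sub>+\<^sub>2\<close>, \<open>F = F\<^sub>k\<close>, \<open>G = F\<^sub>k\<^sub>-\<^sub>2\<close>. The Lucas identity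
  \<open>L\<^sub>i\<^sub>+\<^sub>k = F b - G a\<close> makes the third generator \<open>c\<close> congruent to \<open>F b\<close> modulo \<open>a\<close>.
  Hence, for \<open>0 \<le> t < a\<close>, the least element of the semigroup generated by \<open>b\<close> and \<open>c\<close>
  in the residue class of \<open>t b\<close> is the weight \<open>b (t mod F) + c (t div F)\<close>, obtained by spending
  as many copies of \<open>c\<close> as possible. As \<open>b\<close> is invertible modulo \<open>a\<close>, these weights form an
  Apery set, and the Frobenius number is the largest weight minus \<open>a\<close> (Brauer--Shockley).
  The weight increases within each block of \<open>F\<close> consecutive \<open>t\<close>, and the block ends increase
  by \<open>c\<close>, so the maximum is attained at \<open>t = a - 1\<close> or at the end \<open>t = r F - 1\<close> of the
  last complete block; the case distinction compares these two.\<close>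

definition representable :: "int \<Rightarrow> int \<Rightarrow> int \<Rightarrow> int \<Rightarrow> bool" where
  "representable a b c n \<longleftrightarrow> (\<exists>x y z. 0 \<le> x \<and> 0 \<le> y \<and> 0 \<le> z \<and> n = a * x + b * y + c * z)"

lemma finite_nonneg_solutions:
  assumes "\<forall>a \<in> set as. 0 < a"
  shows "finite {xs :: nat list. length xs = length as \<and> int (\<Sum>j<length as. as ! j * xs ! j) = n}"
    (is "finite ?S")
proof (rule finite_subset)
  show "?S \<subseteq> {xs. set xs \<subseteq> {..nat n} \<and> length xs = length as}"
  proof
    fix xs assume "xs \<in> ?S"
    then have len: "length xs = length as" and sum: "n = int (\<Sum>j<length as. as ! j * xs ! j)"
      by auto
    have "set xs \<subseteq> {..nat n}"
    proof (clarsimp simp: in_set_conv_nth len)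
      fix j assume "j < length as"
      then have "0 < as ! j" using assms by simp
      then have "xs ! j \<le> as ! j * xs ! j" by simp
      also have "\<dots> \<le> (\<Sum>j<length as. as ! j * xs ! j)"
        using \<open>j < length as\<close> by (intro member_le_sum) auto
      finally show "xs ! j \<le> nat n" by (simp only: sum nat_int)
    qed
    with len show "xs \<in> {xs. set xs \<subseteq> {..nat n} \<and> length xs = length as}" by simp
  qed
  show "finite {xs. set xs \<subseteq> {..nat n} \<and> length xs = length as}"
    by (rule finite_lists_length_eq) simp
qed

lemma num_reps_eq_0_iff:
  assumes "0 < a" "0 < b" "0 < c"
  shows "num_reps n [a, b, c] = 0 \<longleftrightarrow> \<not> representable (int a) (int b) (int c) n"
proof -
  have sum3: "(\<Sum>j<length [a, b, c]. [a, b, c] ! j * xs ! j) = a * xs ! 0 + b * xs ! 1 + c * xs ! 2"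
    for xs :: "nat list"
    by (simp add: numeral_3_eq_3 numeral_2_eq_2 lessThan_Suc)
  have "num_reps n [a, b, c] = 0 \<longleftrightarrow>
      {xs :: nat list. length xs = length [a, b, c] \<and> int (a * xs ! 0 + b * xs ! 1 + c * xs ! 2) = n} = {}"
    using finite_nonneg_solutions[of "[a, b, c]" n] assms unfolding num_reps_def sum3 by simp
  also have "\<dots> \<longleftrightarrow> \<not> representable (int a) (int b) (int c) n"
  proof
    assume "\<not> representable (int a) (int b) (int c) n"
    then have "\<not> (length xs = length [a, b, c] \<and> int (a * xs ! 0 + b * xs ! 1 + c * xs ! 2) = n)"
      for xs :: "nat list"
      unfolding representable_def
      by (metis of_nat_0_le_iff of_nat_add of_nat_mult)
    then show "{xs :: nat list. length xs = length [a, b, c] \<and> int (a * xs ! 0 + b * xs ! 1 + c * xs ! 2) = n} = {}"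
      by blast
  next
    assume empty: "{xs :: nat list. length xs = length [a, b, c] \<and>
        int (a * xs ! 0 + b * xs ! 1 + c * xs ! 2) = n} = {}"
    show "\<not> representable (int a) (int b) (int c) n"
    proof
      assume "representable (int a) (int b) (int c) n"
      then obtain x y z :: int where "0 \<le> x" "0 \<le> y" "0 \<le> z" "n = a * x + b * y + c * z"
        unfolding representable_def by blast
      then have "[nat x, nat y, nat z] \<in> {xs :: nat list. length xs = length [a, b, c] \<and>
          int (a * xs ! 0 + b * xs ! 1 + c * xs ! 2) = n}"
        by (simp add: numeral_2_eq_2)
      with empty show False by blast
    qed
  qed
  finally show ?thesis .
qed

locale frobenius_triple =
  fixes a b c F G r :: int
  assumes a_pos: "0 < a" and two_a_le_b: "2 * a \<le> b" and coprime: "coprime a b"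
    and F_pos: "0 < F" and G_pos: "0 < G" and G_le_F: "G \<le> F"
    and c_eq: "c = F * b - G * a" and r_eq: "r = (a - 1) div F"
begin

definition weight :: "int \<Rightarrow> int" where
  "weight t = b * (t mod F) + c * (t div F)"

lemma weight_eq: "weight t = t * b - (t div F) * G * a"
proof -
  have "t * b = b * (t mod F) + F * b * (t div F)"
    by (metis add.commute distrib_left mult.assoc mult.commute mult_div_mod_eq)
  then show ?thesis unfolding weight_def unfolding c_eq by (simp add: algebra_simps)
qed

lemma c_lower_bound: "F * (b - a) \<le> c"
  unfolding c_eq using G_le_F a_pos by (simp add: algebra_simps)

lemma c_pos: "0 < c"
proof -
  have "0 < F * (b - a)" using F_pos two_a_le_b a_pos by simp
  with c_lower_bound show ?thesis by linarith
qed

lemma lin_comb_lower_bound: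
  assumes "0 \<le> y" "0 \<le> z"
  shows "(y + F * z) * (b - a) \<le> b * y + c * z"
proof -
  have "y * (b - a) \<le> y * b" using assms a_pos by (simp add: mult_left_mono)
  moreover have "z * (F * (b - a)) \<le> z * c" using assms c_lower_bound by (simp add: mult_left_mono)
  ultimately show ?thesis by (simp add: algebra_simps)
qed

lemma weight_le_mult_b: "0 \<le> t \<Longrightarrow> weight t \<le> t * b"
  using F_pos G_pos a_pos by (simp add: weight_eq pos_imp_zdiv_nonneg_iff)

text \<open>Since \<open>b * y + c * z \<equiv> (y + F * z) * b (mod a)\<close> and \<open>b\<close> is a unit modulo \<open>a\<close>, a
  representation forces \<open>y + F * z \<equiv> T (mod a)\<close>; then either \<open>y + F * z = T\<close>, which leaves no
  room for the summand \<open>a * x\<close>, or \<open>y + F * z \<ge> T + a\<close>, which makes \<open>b * y + c * z\<close> too large.\<close>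
lemma weight_minus_a_not_representable:
  assumes T: "0 \<le> T" "T < a"
  shows "\<not> representable a b c (weight T - a)"
proof
  assume "representable a b c (weight T - a)"
  then obtain x y z where xyz: "0 \<le> x" "0 \<le> y" "0 \<le> z"
    and eq: "weight T - a = a * x + b * y + c * z"
    unfolding representable_def by blast
  define s where "s = y + F * z"
  have eq_s: "(T - s) * b = a * (x + 1) + (T div F - z) * G * a"
    using eq unfolding weight_eq unfolding c_eq s_def by (simp add: algebra_simps)
  then have "a dvd (T - s) * b" by simp
  then have a_dvd: "a dvd T - s"
    using coprime by (simp add: coprime_dvd_mult_left_iff)
  show False
  proof (cases "s < a")
    case True
    have "0 \<le> s" using xyz F_pos by (simp add: s_def)
    with True T a_dvd have "T = s"
      by (metis mod_eq_dvd_iff mod_pos_pos_trivial)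
    have "z = (F * z) div F" using F_pos by simp
    also have "\<dots> \<le> T div F"
      using \<open>T = s\<close> xyz F_pos by (intro zdiv_mono1) (auto simp: s_def)
    finally have "(z - T div F) * G * a \<le> 0"
      using G_pos a_pos by (simp add: mult_nonpos_nonneg)
    moreover have "0 < a * (x + 1)" using a_pos xyz by simp
    ultimately show False using \<open>T = s\<close> eq_s by (simp add: algebra_simps)
  next
    case False
    with T have "0 < s - T" by simp
    with a_dvd have "a \<le> s - T" by (simp add: zdvd_imp_le dvd_diff_commute)
    then have "(T + a) * b \<le> s * b"
      using two_a_le_b a_pos by (intro mult_right_mono) auto
    also have "\<dots> \<le> 2 * (s * (b - a))"
      using two_a_le_b \<open>a \<le> s - T\<close> T by (simp add: algebra_simps mult_left_mono)
    also have "\<dots> \<le> 2 * (b * y + c * z)"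
      using lin_comb_lower_bound[OF xyz(2,3)] by (simp add: s_def)
    finally have "(T + a) * b \<le> 2 * (b * y + c * z)" .
    moreover have "2 * (T * b) \<le> (T + a) * b"
      using T two_a_le_b a_pos by (simp add: algebra_simps mult_right_mono)
    moreover have "0 \<le> a * x" using a_pos xyz by simp
    ultimately show False using eq a_pos weight_le_mult_b[OF T(1)] by (simp add: algebra_simps)
  qed
qed

lemma representable_above_max_weight:
  assumes max: "\<And>t. 0 \<le> t \<Longrightarrow> t < a \<Longrightarrow> weight t \<le> V" and n: "V - a < n"
  shows "representable a b c n"
proof -
  obtain u where u: "[b * u = 1] (mod a)"
    using cong_solve_coprime_int coprime[THEN coprime_commute[THEN iffD1]] by blast
  define t where "t = (n * u) mod a"
  have t: "0 \<le> t" "t < a" using a_pos by (simp_all add: t_def)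
  have "[weight t = t * b] (mod a)" by (simp add: weight_eq cong_iff_dvd_diff)
  also have "[t * b = n * (b * u)] (mod a)"
    unfolding t_def by (simp add: cong_mult ac_simps)
  also have "[n * (b * u) = n] (mod a)" using cong_scalar_left[OF u, of n] by simp
  finally have "a dvd n - weight t"
    by (simp add: cong_iff_dvd_diff[symmetric] cong_sym)
  then obtain x where x: "n = weight t + a * x"
    by (auto simp: dvd_def algebra_simps)
  have "0 \<le> x"
  proof (rule ccontr)
    assume "\<not> 0 \<le> x"
    then have "a * x \<le> a * (- 1)" using a_pos by (intro mult_left_mono) auto
    with x n max[OF t] show False by linarith
  qed
  moreover have "0 \<le> t mod F" "0 \<le> t div F" using t F_pos by (simp_all add: pos_imp_zdiv_nonneg_iff)
  moreover have "n = a * x + b * (t mod F) + c * (t div F)" using x by (simp add: weight_def)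
  ultimately show ?thesis unfolding representable_def by blast
qed

lemma greatest_not_representable_eq_max_weight:
  assumes T: "0 \<le> T" "T < a" and max: "\<And>t. 0 \<le> t \<Longrightarrow> t < a \<Longrightarrow> weight t \<le> weight T"
  shows "(GREATEST n. \<not> representable a b c n) = weight T - a"
proof (rule Greatest_equality)
  show "\<not> representable a b c (weight T - a)"
    using T by (rule weight_minus_a_not_representable)
  show "n \<le> weight T - a" if "\<not> representable a b c n" for n
    using that representable_above_max_weight[OF max] by (meson not_le)
qed

lemma weight_mono_within_block:
  assumes "t \<le> t'" "t div F = t' div F"
  shows "weight t \<le> weight t'"
proof -
  have "t mod F = t - F * (t' div F)" "t' mod F = t' - F * (t' div F)"
    using assms(2) minus_mult_div_eq_mod[of t F] minus_mult_div_eq_mod[of t' F] by simp_all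
  then have "t mod F \<le> t' mod F" using assms(1) by linarith
  then show ?thesis
    using assms two_a_le_b a_pos by (simp add: weight_def mult_left_mono)
qed

lemma weight_le_block_end: "weight t \<le> (F - 1) * b + (t div F) * c"
proof -
  have "t mod F \<le> F - 1" using F_pos by simp
  then show ?thesis
    using two_a_le_b a_pos by (simp add: weight_def mult_left_mono mult.commute)
qed

lemma weight_block_end: "weight (q * F + (F - 1)) = (F - 1) * b + q * c"
proof -
  have "(F - 1) mod F = F - 1" using F_pos by (intro mod_pos_pos_trivial) auto
  moreover have "(F - 1) div F = 0" using F_pos by (intro div_pos_pos_trivial) auto
  ultimately have "(q * F + (F - 1)) mod F = F - 1" "(q * F + (F - 1)) div F = q"
    using F_pos by (simp_all only: mod_mult_self3 div_mult_self3)
  then show ?thesis unfolding weight_def by (simp add: mult.commute)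
qed

lemma r_nonneg: "0 \<le> r"
  using a_pos F_pos by (simp add: r_eq pos_imp_zdiv_nonneg_iff)

lemma r_mult_F_le: "r * F \<le> a - 1"
proof -
  have "r * F = (a - 1) - (a - 1) mod F" by (simp add: r_eq minus_mod_eq_div_mult)
  moreover have "0 \<le> (a - 1) mod F" using F_pos by simp
  ultimately show ?thesis by linarith
qed

lemma weight_le_max:
  assumes "0 \<le> t" "t < a"
  shows "weight t \<le> weight (a - 1) \<or> (1 \<le> r \<and> weight t \<le> weight (r * F - 1))"
proof -
  have "t div F \<le> r"
    using assms F_pos unfolding r_eq by (intro zdiv_mono1) auto
  then consider "t div F = r" | "t div F \<le> r - 1" by linarith
  then show ?thesis
  proof cases
    case 1
    then show ?thesis using assms by (simp add: r_eq weight_mono_within_block)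
  next
    case 2
    have "weight t \<le> (F - 1) * b + (t div F) * c" by (rule weight_le_block_end)
    also have "\<dots> \<le> (F - 1) * b + (r - 1) * c"
      using 2 c_pos by (simp add: mult_right_mono)
    also have "\<dots> = weight (r * F - 1)"
      using weight_block_end[of "r - 1"] by (simp add: algebra_simps)
    moreover have "0 \<le> t div F" using assms F_pos by (simp add: pos_imp_zdiv_nonneg_iff)
    ultimately show ?thesis using 2 by simp
  qed
qed

lemma weight_a_minus_1: "weight (a - 1) = (a - 1) * b - r * G * a"
  by (simp add: weight_eq r_eq)

lemma weight_r_F_minus_1: "weight (r * F - 1) = (r * F - 1) * b - (r - 1) * G * a"
  using weight_block_end[of "r - 1"] unfolding c_eq by (simp add: algebra_simps)

theorem greatest_not_representable:
  "(GREATEST n. \<not> representable a b c n) =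
    (if r = 0 \<or> (r \<ge> 1 \<and> (a - r * F) * b > G * a)
     then (a - 1) * b - a * (r * G + 1) else (r * F - 1) * b - a * ((r - 1) * G + 1))"
proof -
  have diff: "weight (a - 1) - weight (r * F - 1) = (a - r * F) * b - G * a"
    unfolding weight_a_minus_1 weight_r_F_minus_1 by (simp add: algebra_simps)
  show ?thesis
  proof (cases "r = 0 \<or> (r \<ge> 1 \<and> (a - r * F) * b > G * a)")
    case True
    have "weight t \<le> weight (a - 1)" if "0 \<le> t" "t < a" for t
      using weight_le_max[OF that] True diff by auto
    then have "(GREATEST n. \<not> representable a b c n) = weight (a - 1) - a"
      using a_pos by (intro greatest_not_representable_eq_max_weight) auto
    with True show ?thesis by (simp add: weight_a_minus_1 algebra_simps)
  next
    case False
    then have "1 \<le> r" using r_nonneg by auto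
    then have "0 \<le> r * F - 1" using F_pos mult_mono[of 1 r 1 F] by simp
    have "weight t \<le> weight (r * F - 1)" if "0 \<le> t" "t < a" for t
      using weight_le_max[OF that] False diff \<open>1 \<le> r\<close> by auto
    then have "(GREATEST n. \<not> representable a b c n) = weight (r * F - 1) - a"
      using \<open>0 \<le> r * F - 1\<close> r_mult_F_le by (intro greatest_not_representable_eq_max_weight) auto
    with False show ?thesis unfolding weight_r_F_minus_1 by (simp add: algebra_simps)
  qed
qed

end

lemma lucas_pos: "0 < lucas n"
  by (induction n rule: lucas.induct) auto

lemma lucas_add_fib:
  "lucas (n + m + 2) + fib m * lucas n = fib (m + 2) * lucas (n + 2)"
proof (induction m rule: fib.induct)
  case (3 m)
  then show ?case by (simp add: algebra_simps)
qed simp_all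

lemma coprime_lucas_Suc: "coprime (lucas n) (lucas (Suc n))"
proof (induction n)
  case (Suc n)
  have "gcd (lucas (Suc n)) (lucas (Suc n) + lucas n) = gcd (lucas n) (lucas (Suc n))"
    by (simp only: gcd_add2 gcd.commute)
  with Suc show ?case by (simp add: coprime_iff_gcd_eq_1)
qed simp

lemma coprime_lucas_add_2: "coprime (lucas n) (lucas (n + 2))"
proof -
  have "gcd (lucas n) (lucas (n + 2)) = gcd (lucas n) (lucas (Suc n))"
    by (simp add: numeral_2_eq_2 add.commute[of "lucas (Suc n)"])
  with coprime_lucas_Suc[of n] show ?thesis by (simp add: coprime_iff_gcd_eq_1)
qed

lemma lucas_le_add_2: "1 \<le> n \<Longrightarrow> 2 * lucas n \<le> lucas (n + 2)"
  by (cases n rule: lucas.cases) auto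

theorem theorem1:
  fixes i k :: nat
  assumes "i \<ge> 3" and "k \<ge> 3"
  defines "r \<equiv> (int (lucas i) - 1) div int (fib k)"
  shows "p_frobenius 0 [lucas i, lucas (i + 2), lucas (i + k)] =
    (if r = 0 \<or> (r \<ge> 1 \<and> (int (lucas i) - r * int (fib k)) * int (lucas (i + 2))
                     > int (fib (k - 2)) * int (lucas i))
     then (int (lucas i) - 1) * int (lucas (i + 2)) - int (lucas i) * (r * int (fib (k - 2)) + 1)
     else (r * int (fib k) - 1) * int (lucas (i + 2)) - int (lucas i) * ((r - 1) * int (fib (k - 2)) + 1))"
proof -
  have "k - 2 + 2 = k" using assms(2) by simp
  then have "lucas (i + k) + fib (k - 2) * lucas i = fib k * lucas (i + 2)"
    using lucas_add_fib[of i "k - 2"] by (simp only: add.assoc)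
  then have lucas_i_k: "int (lucas (i + k)) = int (fib k) * int (lucas (i + 2)) - int (fib (k - 2)) * int (lucas i)"
    by (simp flip: of_nat_mult of_nat_add)
  interpret frobenius_triple "int (lucas i)" "int (lucas (i + 2))" "int (lucas (i + k))"
    "int (fib k)" "int (fib (k - 2))" r
  proof
    show "2 * int (lucas i) \<le> int (lucas (i + 2))"
      using lucas_le_add_2[of i] assms(1) by linarith
    show "coprime (int (lucas i)) (int (lucas (i + 2)))"
      using coprime_lucas_add_2 by (simp only: coprime_int_iff)
    show "int (fib (k - 2)) \<le> int (fib k)" by (simp add: fib_mono)
  qed (use assms lucas_pos fib_neq_0_nat lucas_i_k r_def in auto)
  have "p_frobenius 0 [lucas i, lucas (i + 2), lucas (i + k)] =
      (GREATEST n. \<not> representable (lucas i) (lucas (i + 2)) (lucas (i + k)) n)"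
    unfolding p_frobenius_def using num_reps_eq_0_iff lucas_pos by simp
  then show ?thesis
    using greatest_not_representable by simp
qed
end
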